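(* Let $D$ be a strongly connected digraph with at least two vertices. Then (a) $src^*(D)=1$ if and only if $rc^*(D)=1$, if and only if $D$ is the biorientation $\overleftrightarrow{K_n}$ of the complete graph $K_n$ for some $n\ge 2$; (b) $rc^*(D)=2$ if and only if $src^*(D)=2$.
   Context: All digraphs are finite, without loops or multiple arcs. For a strongly connected digraph $D$ and an arc-colouring $\Gamma:A(D)\to\{1,\dots,k\}$, a directed path is rainbow if no two of its arcs receive the same colour. $\Gamma$ is rainbow connected if for every ordered pair of distinct vertices $x,y$ there is a rainbow directed $xy$-path; $rc^*(D)$ is the minimum $k$ for which a rainbow connected arc-colouring with $k$ colours exists. $\Gamma$ is strongly rainbow connected if for every ordered pair of distinct vertices $x,y$ there is a rainbow directed $xy$-path of length $d_D(x,y)$; $src^*(D)$ is the minimum such $k$. The biorientation $\overleftrightarrow{G}$ of a graph $G$ is the digraph obtained by replacing each edge $uv$ by the two arcs $uv$ and $vu$. *)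

theory Defs
  imports Main
begin

definition digraph :: "'a set \<Rightarrow> ('a \<times> 'a) set \<Rightarrow> bool" where
  "digraph V A \<longleftrightarrow> finite V \<and> A \<subseteq> V \<times> V \<and> (\<forall>v. (v, v) \<notin> A)"

definition dpath :: "('a \<times> 'a) set \<Rightarrow> 'a \<Rightarrow> 'a \<Rightarrow> 'a list \<Rightarrow> bool" where
  "dpath A x y p \<longleftrightarrow> p \<noteq> [] \<and> hd p = x \<and> last p = y \<and> distinct p \<and>
     (\<forall>i. Suc i < length p \<longrightarrow> (p ! i, p ! Suc i) \<in> A)"

definition path_arcs :: "'a list \<Rightarrow> ('a \<times> 'a) list" where
  "path_arcs p = zip p (tl p)"

definition path_len :: "'a list \<Rightarrow> nat" where
  "path_len p = length p - 1"

definition strongly_connected :: "'a set \<Rightarrow> ('a \<times> 'a) set \<Rightarrow> bool" where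
  "strongly_connected V A \<longleftrightarrow> (\<forall>x\<in>V. \<forall>y\<in>V. \<exists>p. dpath A x y p)"

definition ddist :: "('a \<times> 'a) set \<Rightarrow> 'a \<Rightarrow> 'a \<Rightarrow> nat" where
  "ddist A x y = (LEAST n. \<exists>p. dpath A x y p \<and> path_len p = n)"

definition rainbow :: "('a \<times> 'a \<Rightarrow> nat) \<Rightarrow> 'a list \<Rightarrow> bool" where
  "rainbow \<Gamma> p \<longleftrightarrow> distinct (map \<Gamma> (path_arcs p))"

definition arc_colouring :: "('a \<times> 'a) set \<Rightarrow> nat \<Rightarrow> ('a \<times> 'a \<Rightarrow> nat) \<Rightarrow> bool" where
  "arc_colouring A k \<Gamma> \<longleftrightarrow> (\<forall>a\<in>A. \<Gamma> a \<in> {1..k})"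

definition rainbow_connected :: "'a set \<Rightarrow> ('a \<times> 'a) set \<Rightarrow> ('a \<times> 'a \<Rightarrow> nat) \<Rightarrow> bool" where
  "rainbow_connected V A \<Gamma> \<longleftrightarrow>
     (\<forall>x\<in>V. \<forall>y\<in>V. x \<noteq> y \<longrightarrow> (\<exists>p. dpath A x y p \<and> rainbow \<Gamma> p))"

definition strongly_rainbow_connected :: "'a set \<Rightarrow> ('a \<times> 'a) set \<Rightarrow> ('a \<times> 'a \<Rightarrow> nat) \<Rightarrow> bool" where
  "strongly_rainbow_connected V A \<Gamma> \<longleftrightarrow>
     (\<forall>x\<in>V. \<forall>y\<in>V. x \<noteq> y \<longrightarrow>
        (\<exists>p. dpath A x y p \<and> path_len p = ddist A x y \<and> rainbow \<Gamma> p))"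

definition rc :: "'a set \<Rightarrow> ('a \<times> 'a) set \<Rightarrow> nat" where
  "rc V A = (LEAST k. \<exists>\<Gamma>. arc_colouring A k \<Gamma> \<and> rainbow_connected V A \<Gamma>)"

definition src :: "'a set \<Rightarrow> ('a \<times> 'a) set \<Rightarrow> nat" where
  "src V A = (LEAST k. \<exists>\<Gamma>. arc_colouring A k \<Gamma> \<and> strongly_rainbow_connected V A \<Gamma>)"

definition complete_graph_edges :: "'a set \<Rightarrow> 'a set set" where
  "complete_graph_edges V = {{u, v} | u v. u \<in> V \<and> v \<in> V \<and> u \<noteq> v}"

definition biorientation :: "'a set set \<Rightarrow> ('a \<times> 'a) set" where
  "biorientation E = {(u, v). u \<noteq> v \<and> {u, v} \<in> E}"

end

theory Submission
  imports Defs
begin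

text \<open>A rainbow path under a colouring with k colours has at most k arcs, and a path between
  distinct vertices has at least one. With one colour every ordered pair of distinct vertices
  must therefore be joined by an arc, which forces the complete biorientation; conversely there
  any colouring is strongly rainbow connected by the single-arc paths. With two colours a rainbow
  path has length 1 or 2; length 1 means an arc, and if there is no arc the distance is at
  least 2, so the rainbow path is a shortest one. Hence every rainbow connected 2-colouring is
  strongly rainbow connected.\<close>


lemma dpath_arcs_subset:
  assumes "dpath A x y p"
  shows "set (path_arcs p) \<subseteq> A"
proof
  fix e assume "e \<in> set (path_arcs p)"
  then obtain n where "n < length (tl p)" "e = (p ! n, tl p ! n)"
    unfolding path_arcs_def by (auto simp: in_set_conv_nth)
  then show "e \<in> A" using assms unfolding dpath_def by (auto simp: nth_tl)
qed

lemma dpath_distinct_arcs: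
  assumes "dpath A x y p"
  shows "distinct (path_arcs p)"
  using assms unfolding dpath_def path_arcs_def by (simp add: distinct_zipI1)

lemma dpath_path_len_ge_1:
  assumes "dpath A x y p" "x \<noteq> y"
  shows "1 \<le> path_len p"
  using assms unfolding dpath_def path_len_def
  by (cases p) (auto simp: Suc_le_eq)

lemma dpath_path_len_1_imp_arc:
  assumes "dpath A x y p" "path_len p = 1"
  shows "(x, y) \<in> A"
proof -
  have "length p = 2" using assms unfolding path_len_def dpath_def by (cases p) auto
  then obtain a b where "p = [a, b]" by (auto simp: length_Suc_conv numeral_2_eq_2)
  then show ?thesis using assms(1) unfolding dpath_def by force
qed

lemma arc_dpath:
  assumes "(x, y) \<in> A" "x \<noteq> y"
  shows "dpath A x y [x, y]" and "path_len [x, y] = 1" and "rainbow \<Gamma> [x, y]"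
  using assms unfolding dpath_def path_len_def rainbow_def path_arcs_def
  by (auto simp: less_Suc_eq)

lemma ddist_le_path_len:
  assumes "dpath A x y p"
  shows "ddist A x y \<le> path_len p"
  unfolding ddist_def using assms by (intro Least_le) auto

lemma shortest_dpath_exists:
  assumes "dpath A x y p"
  obtains q where "dpath A x y q" "path_len q = ddist A x y"
proof -
  have "\<exists>q. dpath A x y q \<and> path_len q = ddist A x y"
    unfolding ddist_def by (rule LeastI_ex) (use assms in blast)
  with that show ?thesis by blast
qed

lemma ddist_arc:
  assumes "(x, y) \<in> A" "x \<noteq> y"
  shows "ddist A x y = 1"
proof -
  obtain q where "dpath A x y q" "path_len q = ddist A x y"
    using shortest_dpath_exists[OF arc_dpath(1)[OF assms]] .
  then have "1 \<le> ddist A x y" using dpath_path_len_ge_1 assms(2) by metis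
  moreover have "ddist A x y \<le> 1"
    using ddist_le_path_len[OF arc_dpath(1)[OF assms]] arc_dpath(2)[OF assms] by simp
  ultimately show ?thesis by simp
qed


lemma rainbow_path_len_le:
  assumes "dpath A x y p" "rainbow \<Gamma> p" "arc_colouring A k \<Gamma>"
  shows "path_len p \<le> k"
proof -
  have "set (map \<Gamma> (path_arcs p)) \<subseteq> {1..k}"
    using dpath_arcs_subset[OF assms(1)] assms(3) unfolding arc_colouring_def by auto
  then have "card (set (map \<Gamma> (path_arcs p))) \<le> k"
    using card_mono[of "{1..k}"] by fastforce
  moreover have "card (set (map \<Gamma> (path_arcs p))) = path_len p"
    using distinct_card assms(2) unfolding rainbow_def by (fastforce simp: path_arcs_def path_len_def)
  ultimately show ?thesis by simp
qed

lemma strongly_rainbow_connected_imp_rainbow_connected: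
  "strongly_rainbow_connected V A \<Gamma> \<Longrightarrow> rainbow_connected V A \<Gamma>"
  unfolding strongly_rainbow_connected_def rainbow_connected_def by blast

text \<open>Giving every arc its own colour makes every shortest path rainbow.\<close>

lemma strongly_rainbow_connected_colouring_exists:
  assumes "digraph V A" "strongly_connected V A"
  shows "\<exists>k \<Gamma>. arc_colouring A k \<Gamma> \<and> strongly_rainbow_connected V A \<Gamma>"
proof -
  have "finite A" using assms(1) unfolding digraph_def by (meson finite_SigmaI finite_subset)
  obtain f :: "'a \<times> 'a \<Rightarrow> nat" and n where f: "f ` A = {i. i < n}" "inj_on f A"
    using finite_imp_inj_to_nat_seg[OF \<open>finite A\<close>] by blast
  define \<Gamma> where "\<Gamma> a = Suc (f a)" for a
  have "arc_colouring A n \<Gamma>"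
    using f(1) unfolding arc_colouring_def \<Gamma>_def by (auto simp: Suc_le_eq)
  moreover have "strongly_rainbow_connected V A \<Gamma>"
    unfolding strongly_rainbow_connected_def
  proof (intro ballI impI)
    fix x y assume "x \<in> V" "y \<in> V" "x \<noteq> y"
    then obtain p where "dpath A x y p" using assms(2) unfolding strongly_connected_def by blast
    then obtain q where q: "dpath A x y q" "path_len q = ddist A x y"
      by (rule shortest_dpath_exists)
    have "inj_on \<Gamma> (set (path_arcs q))"
      using inj_on_subset[OF f(2) dpath_arcs_subset[OF q(1)]] unfolding \<Gamma>_def inj_on_def by simp
    then have "rainbow \<Gamma> q"
      unfolding rainbow_def using dpath_distinct_arcs[OF q(1)] by (simp add: distinct_map)
    with q show "\<exists>p. dpath A x y p \<and> path_len p = ddist A x y \<and> rainbow \<Gamma> p" by blast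
  qed
  ultimately show ?thesis by blast
qed

lemma rainbow_connected_2_imp_strongly_rainbow_connected:
  assumes "arc_colouring A 2 \<Gamma>" "rainbow_connected V A \<Gamma>"
  shows "strongly_rainbow_connected V A \<Gamma>"
  unfolding strongly_rainbow_connected_def
proof (intro ballI impI)
  fix x y assume xy: "x \<in> V" "y \<in> V" "x \<noteq> y"
  show "\<exists>p. dpath A x y p \<and> path_len p = ddist A x y \<and> rainbow \<Gamma> p"
  proof (cases "(x, y) \<in> A")
    case True
    have "path_len [x, y] = ddist A x y"
      using arc_dpath(2)[OF True xy(3)] ddist_arc[OF True xy(3)] by simp
    then show ?thesis using arc_dpath(1,3)[OF True xy(3)] by blast
  next
    case False
    obtain p where p: "dpath A x y p" "rainbow \<Gamma> p"
      using assms(2) xy unfolding rainbow_connected_def by blast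
    obtain q where q: "dpath A x y q" "path_len q = ddist A x y"
      using shortest_dpath_exists[OF p(1)] .
    have "path_len q \<noteq> 1" using dpath_path_len_1_imp_arc[OF q(1)] False by blast
    then have "2 \<le> path_len q" using dpath_path_len_ge_1[OF q(1) xy(3)] by simp
    moreover have "path_len p \<le> 2" using rainbow_path_len_le[OF p assms(1)] by simp
    moreover have "ddist A x y \<le> path_len p" using ddist_le_path_len[OF p(1)] .
    ultimately have "path_len p = ddist A x y" using q(2) by simp
    with p show ?thesis by blast
  qed
qed


lemma mem_biorientation_complete_graph_edges:
  "(u, v) \<in> biorientation (complete_graph_edges V) \<longleftrightarrow> u \<in> V \<and> v \<in> V \<and> u \<noteq> v"
  unfolding biorientation_def complete_graph_edges_def by (auto simp: doubleton_eq_iff)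

lemma digraph_eq_complete_biorientation_iff:
  assumes "digraph V A"
  shows "A = biorientation (complete_graph_edges V) \<longleftrightarrow>
    (\<forall>u\<in>V. \<forall>v\<in>V. u \<noteq> v \<longrightarrow> (u, v) \<in> A)"
  using assms unfolding digraph_def by (auto simp: mem_biorientation_complete_graph_edges)

lemma rainbow_connected_1_imp_complete:
  assumes "digraph V A" "arc_colouring A 1 \<Gamma>" "rainbow_connected V A \<Gamma>"
  shows "A = biorientation (complete_graph_edges V)"
  unfolding digraph_eq_complete_biorientation_iff[OF assms(1)]
proof (intro ballI impI)
  fix u v assume uv: "u \<in> V" "v \<in> V" "u \<noteq> v"
  then obtain p where p: "dpath A u v p" "rainbow \<Gamma> p"
    using assms(3) unfolding rainbow_connected_def by blast
  then have "path_len p = 1"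
    using rainbow_path_len_le[OF p assms(2)] dpath_path_len_ge_1[OF p(1) uv(3)] by simp
  then show "(u, v) \<in> A" using dpath_path_len_1_imp_arc[OF p(1)] by blast
qed

lemma complete_imp_strongly_rainbow_connected:
  assumes "digraph V A" "A = biorientation (complete_graph_edges V)"
  shows "strongly_rainbow_connected V A \<Gamma>"
  unfolding strongly_rainbow_connected_def
proof (intro ballI impI)
  fix u v assume uv: "u \<in> V" "v \<in> V" "u \<noteq> v"
  then have uv_arc: "(u, v) \<in> A" using assms digraph_eq_complete_biorientation_iff by blast
  then have "path_len [u, v] = ddist A u v"
    using arc_dpath(2)[OF uv_arc uv(3)] ddist_arc[OF uv_arc uv(3)] by simp
  then show "\<exists>p. dpath A u v p \<and> path_len p = ddist A u v \<and> rainbow \<Gamma> p"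
    using arc_dpath(1,3)[OF uv_arc uv(3)] by blast
qed


lemma arc_colouring_1: "arc_colouring A 1 (\<lambda>_. 1)"
  unfolding arc_colouring_def by simp

lemma rc_le:
  "arc_colouring A k \<Gamma> \<Longrightarrow> rainbow_connected V A \<Gamma> \<Longrightarrow> rc V A \<le> k"
  unfolding rc_def by (intro Least_le) blast

lemma src_le:
  "arc_colouring A k \<Gamma> \<Longrightarrow> strongly_rainbow_connected V A \<Gamma> \<Longrightarrow> src V A \<le> k"
  unfolding src_def by (intro Least_le) blast

lemma src_colouring_exists:
  assumes "digraph V A" "strongly_connected V A"
  obtains \<Gamma> where "arc_colouring A (src V A) \<Gamma>" "strongly_rainbow_connected V A \<Gamma>"
  using LeastI_ex[OF strongly_rainbow_connected_colouring_exists[OF assms]] that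
  unfolding src_def by blast

lemma rc_colouring_exists:
  assumes "digraph V A" "strongly_connected V A"
  obtains \<Gamma> where "arc_colouring A (rc V A) \<Gamma>" "rainbow_connected V A \<Gamma>"
proof -
  have "\<exists>k \<Gamma>. arc_colouring A k \<Gamma> \<and> rainbow_connected V A \<Gamma>"
    using strongly_rainbow_connected_colouring_exists[OF assms]
      strongly_rainbow_connected_imp_rainbow_connected by blast
  then have "\<exists>\<Gamma>. arc_colouring A (rc V A) \<Gamma> \<and> rainbow_connected V A \<Gamma>"
    unfolding rc_def by (rule LeastI_ex)
  with that show ?thesis by blast
qed

lemma rc_le_src:
  assumes "digraph V A" "strongly_connected V A"
  shows "rc V A \<le> src V A"
  using src_colouring_exists[OF assms] rc_le strongly_rainbow_connected_imp_rainbow_connected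
  by metis

lemma rc_ge_1:
  assumes "digraph V A" "strongly_connected V A" "x \<in> V" "y \<in> V" "x \<noteq> y"
  shows "1 \<le> rc V A"
proof -
  obtain \<Gamma> where \<Gamma>: "arc_colouring A (rc V A) \<Gamma>" "rainbow_connected V A \<Gamma>"
    using rc_colouring_exists[OF assms(1,2)] .
  then obtain p where p: "dpath A x y p" "rainbow \<Gamma> p"
    using assms(3-5) unfolding rainbow_connected_def by blast
  have "1 \<le> path_len p" using dpath_path_len_ge_1[OF p(1) assms(5)] .
  also have "\<dots> \<le> rc V A" using rainbow_path_len_le[OF p \<Gamma>(1)] .
  finally show ?thesis .
qed

lemma rc_eq_1_iff_complete:
  assumes "digraph V A" "strongly_connected V A" "x \<in> V" "y \<in> V" "x \<noteq> y"
  shows "rc V A = 1 \<longleftrightarrow> A = biorientation (complete_graph_edges V)"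
proof
  assume "rc V A = 1"
  with rc_colouring_exists[OF assms(1,2)] show "A = biorientation (complete_graph_edges V)"
    using rainbow_connected_1_imp_complete[OF assms(1)] by metis
next
  assume "A = biorientation (complete_graph_edges V)"
  then have "strongly_rainbow_connected V A (\<lambda>_. 1)"
    by (rule complete_imp_strongly_rainbow_connected[OF assms(1)])
  then have "rc V A \<le> 1"
    using rc_le arc_colouring_1 strongly_rainbow_connected_imp_rainbow_connected by blast
  with rc_ge_1[OF assms] show "rc V A = 1" by simp
qed

lemma src_eq_1_iff_complete:
  assumes "digraph V A" "strongly_connected V A" "x \<in> V" "y \<in> V" "x \<noteq> y"
  shows "src V A = 1 \<longleftrightarrow> A = biorientation (complete_graph_edges V)"
proof
  assume "src V A = 1"
  with rc_ge_1[OF assms] rc_le_src[OF assms(1,2)] have "rc V A = 1" by simp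
  with rc_eq_1_iff_complete[OF assms] show "A = biorientation (complete_graph_edges V)" by simp
next
  assume "A = biorientation (complete_graph_edges V)"
  then have "strongly_rainbow_connected V A (\<lambda>_. 1)"
    by (rule complete_imp_strongly_rainbow_connected[OF assms(1)])
  then have "src V A \<le> 1" using src_le arc_colouring_1 by blast
  with rc_ge_1[OF assms] rc_le_src[OF assms(1,2)] show "src V A = 1" by simp
qed

lemma src_le_2_if_rc_eq_2:
  assumes "digraph V A" "strongly_connected V A" "rc V A = 2"
  shows "src V A \<le> 2"
  using rc_colouring_exists[OF assms(1,2)] assms(3)
    rainbow_connected_2_imp_strongly_rainbow_connected src_le
  by metis

theorem theorem2:
  fixes V :: "'a set" and A :: "('a \<times> 'a) set"
  assumes "digraph V A" and "strongly_connected V A" and "card V \<ge> 2"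
  shows "(src V A = 1 \<longleftrightarrow> rc V A = 1)
       \<and> (rc V A = 1 \<longleftrightarrow> (card V \<ge> 2 \<and> A = biorientation (complete_graph_edges V)))
       \<and> (rc V A = 2 \<longleftrightarrow> src V A = 2)"
proof -
  have "finite V" using assms(3) card.infinite by fastforce
  moreover have "\<not> card V \<le> Suc 0" using assms(3) by simp
  ultimately obtain x y where xy: "x \<in> V" "y \<in> V" "x \<noteq> y"
    using card_le_Suc0_iff_eq by blast
  note rc1 = rc_eq_1_iff_complete[OF assms(1,2) xy]
  note src1 = src_eq_1_iff_complete[OF assms(1,2) xy]
  have "rc V A = 2 \<longleftrightarrow> src V A = 2"
    using rc1 src1 rc_ge_1[OF assms(1,2) xy] rc_le_src[OF assms(1,2)]
      src_le_2_if_rc_eq_2[OF assms(1,2)] by linarith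
  with rc1 src1 assms(3) show ?thesis by blast
qed

end
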